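(* Let $\mathcal{X}=\mathbb{R}/\mathbb{Z}$, let $f_c\in\mathbb{N}$, let $\tilde\varphi_D(x)=\sum_{|k|\le f_c}e^{2\pi i k x}$ and let $\varphi(x)=\tilde\varphi_D(\cdot-x)\in\mathcal{H}=L^2(\mathbb{R}/\mathbb{Z})$. Let $N\in\mathbb{N}$ and suppose $f_c=N$. Then for every $N$-tuple $Z=(z_1,\dots,z_N)$ of pairwise distinct points of $\mathcal{X}$ one has $\eta_{V,Z}(x)<1$ for all $x\notin\{z_1,\dots,z_N\}$, and there is a constant $C>0$ such that $$\eta_W(x)=1-C\sin^{2N}(\pi x)\quad\text{for all }x\in\mathcal{X}.$$ In particular $\eta_W(x)<1$ for all $x\in\mathcal{X}\setminus\{0\}$.
   Context: For $p\in\mathcal{H}$ write $(\Phi^*p)(x)=\langle\varphi(x),p\rangle_{\mathcal{H}}$ (a smooth function on $\mathcal{X}$). The vanishing pre-certificate is $\eta_{V,Z}=\Phi^*p_{V,Z}$ where $p_{V,Z}$ is the element of minimal $\mathcal{H}$-norm among all $p\in\mathcal{H}$ with $(\Phi^*p)(z_i)=1$ and $(\Phi^*p)'(z_i)=0$ for $i=1,\dots,N$. The limiting pre-certificate is $\eta_W=\Phi^*p_W$ where $p_W$ is the element of minimal $\mathcal{H}$-norm among all $p$ with $(\Phi^*p)(0)=1$ and $(\Phi^*p)^{(s)}(0)=0$ for $s=1,\dots,2N-1$. *)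

theory Defs
  imports "HOL-Analysis.Analysis"
begin

text \<open>The torus R/Z is represented by real numbers; elements of
  H = L^2(R/Z) are represented by complex-valued functions on the reals that
  are measurable and square integrable on the fundamental domain [0,1]
  (only their values on [0,1] matter).\<close>

definition dirichlet :: "nat \<Rightarrow> real \<Rightarrow> complex" where
  "dirichlet fc t = (\<Sum>k\<in>{- int fc..int fc}. cis (2 * pi * of_int k * t))"

definition feat :: "nat \<Rightarrow> real \<Rightarrow> (real \<Rightarrow> complex)" where
  "feat fc x = (\<lambda>t. dirichlet fc (t - x))"

definition L2 :: "(real \<Rightarrow> complex) \<Rightarrow> bool" where
  "L2 p \<longleftrightarrow> set_borel_measurable lborel {0..1} p \<and>
              set_integrable lborel {0..1} (\<lambda>t. (cmod (p t))^2)"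

definition l2normsq :: "(real \<Rightarrow> complex) \<Rightarrow> real" where
  "l2normsq p = (LINT t:{0..1}|lborel. (cmod (p t))^2)"

definition innerH :: "(real \<Rightarrow> complex) \<Rightarrow> (real \<Rightarrow> complex) \<Rightarrow> complex" where
  "innerH f g = (LINT t:{0..1}|lborel. cnj (f t) * g t)"

definition Phi_adj :: "nat \<Rightarrow> (real \<Rightarrow> complex) \<Rightarrow> real \<Rightarrow> complex" where
  "Phi_adj fc p x = innerH (feat fc x) p"

fun hderiv :: "nat \<Rightarrow> (real \<Rightarrow> complex) \<Rightarrow> real \<Rightarrow> complex" where
  "hderiv 0 f = f"
| "hderiv (Suc n) f = (\<lambda>x. vector_derivative (hderiv n f) (at x))"

definition admissible_V :: "nat \<Rightarrow> nat \<Rightarrow> (nat \<Rightarrow> real) \<Rightarrow> (real \<Rightarrow> complex) \<Rightarrow> bool" where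
  "admissible_V fc N z p \<longleftrightarrow> L2 p \<and>
     (\<forall>i<N. Phi_adj fc p (z i) = 1 \<and> hderiv 1 (Phi_adj fc p) (z i) = 0)"

definition vanishing_precert_vec :: "nat \<Rightarrow> nat \<Rightarrow> (nat \<Rightarrow> real) \<Rightarrow> (real \<Rightarrow> complex) \<Rightarrow> bool" where
  "vanishing_precert_vec fc N z p \<longleftrightarrow> admissible_V fc N z p \<and>
     (\<forall>q. admissible_V fc N z q \<longrightarrow> l2normsq p \<le> l2normsq q)"

definition admissible_W :: "nat \<Rightarrow> nat \<Rightarrow> (real \<Rightarrow> complex) \<Rightarrow> bool" where
  "admissible_W fc N p \<longleftrightarrow> L2 p \<and> Phi_adj fc p 0 = 1 \<and>
     (\<forall>s\<in>{1..2*N-1}. hderiv s (Phi_adj fc p) 0 = 0)"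

definition limiting_precert_vec :: "nat \<Rightarrow> nat \<Rightarrow> (real \<Rightarrow> complex) \<Rightarrow> bool" where
  "limiting_precert_vec fc N p \<longleftrightarrow> admissible_W fc N p \<and>
     (\<forall>q. admissible_W fc N q \<longrightarrow> l2normsq p \<le> l2normsq q)"

end

theory Submission
  imports Defs "HOL-Computational_Algebra.Polynomial"
begin

text \<open>Write e(x) = exp(2 \<pi> i x). For square-integrable p, \<open>Phi_adj N p\<close> is the trigonometric
  polynomial \<open>\<Sum>\<^bsub>|k| \<le> N\<^esub> p\<^sub>k e(kx)\<close> built from the Fourier coefficients \<open>p\<^sub>k\<close> of p. The
  interpolation constraints are 2N independent linear conditions on these 2N+1 coefficients, so
  the admissible coefficient vectors form an affine line \<open>e\<^sub>0 + t \<gamma>\<close> with \<open>\<gamma>\<close> spanning the kernel.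
  By Bessel's inequality \<open>\<parallel>p\<parallel>\<^sup>2 \<ge> \<Sum> |p\<^sub>k|\<^sup>2\<close>, with equality for the trigonometric polynomial
  itself, so the minimiser is the point of the line closest to the origin, \<open>t = -\<gamma>\<^sub>0 / \<parallel>\<gamma>\<parallel>\<^sup>2\<close>,
  and the pre-certificate is \<open>1 - (\<gamma>\<^sub>0 / \<parallel>\<gamma>\<parallel>\<^sup>2) \<Sum> \<gamma>\<^sub>k e(kx)\<close>.

  For the vanishing pre-certificate \<open>\<gamma>\<close> corresponds to the polynomial \<open>\<Prod> (w - e(z\<^sub>i))\<^sup>2\<close>, whose
  trigonometric polynomial is a positive multiple of \<open>\<Prod> sin\<^sup>2(\<pi>(x - z\<^sub>i))\<close>. For the limiting one
  the constraints say that the moments of order below 2N of \<open>\<gamma>\<close> vanish, which singles out the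
  alternating binomial coefficients, i.e. \<open>sin\<^sup>2\<^sup>N(\<pi>x)\<close>. In both cases \<open>\<gamma>\<^sub>0\<close> is the mean of a
  nonnegative function that is not identically zero, hence positive.\<close>

lemma cis_has_vector_derivative:
  "((\<lambda>x. cis (a * x)) has_vector_derivative (\<i> * of_real a * cis (a * x))) (at x within S)"
proof -
  have "((\<lambda>x. cis (a * x)) has_derivative (\<lambda>t. (a * t) *\<^sub>R (\<i> * cis (a * x)))) (at x within S)"
    by (intro derivative_eq_intros) auto
  moreover have "(\<lambda>t. (a * t) *\<^sub>R (\<i> * cis (a * x))) = (\<lambda>t. t *\<^sub>R (\<i> * of_real a * cis (a * x)))"
    by (auto simp: scaleR_conv_of_real)
  ultimately show ?thesis unfolding has_vector_derivative_def by simp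
qed

lemma set_integral_sum:
  "(\<And>i. i \<in> I \<Longrightarrow> set_integrable M A (f i)) \<Longrightarrow>
   (LINT x:A|M. (\<Sum>i\<in>I. f i x)) = (\<Sum>i\<in>I. LINT x:A|M. f i x)"
  unfolding set_lebesgue_integral_def set_integrable_def
  by (simp add: scaleR_sum_right integral_sum)

lemma set_integrable_sum:
  "(\<And>i. i \<in> I \<Longrightarrow> set_integrable M A (f i)) \<Longrightarrow> set_integrable M A (\<lambda>x. \<Sum>i\<in>I. f i x)"
  unfolding set_integrable_def scaleR_sum_right
  by (auto intro!: Bochner_Integration.integrable_sum)

lemma set_integrable_Re:
  "set_integrable M A f \<Longrightarrow> set_integrable M A (\<lambda>x. Re (f x))"
  unfolding set_integrable_def by (drule integrable_Re) (simp add: scaleR_conv_of_real)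

lemma set_integral_Re:
  assumes "set_integrable M A f"
  shows "(LINT x:A|M. Re (f x)) = Re (LINT x:A|M. f x)"
proof -
  have "integrable M (\<lambda>x. indicat_real A x *\<^sub>R f x)"
    using assms by (simp add: set_integrable_def)
  from integral_bounded_linear[OF bounded_linear_Re this] show ?thesis
    by (simp add: set_lebesgue_integral_def scaleR_conv_of_real)
qed

lemma set_integrable_cnj:
  "set_integrable M A f \<Longrightarrow> set_integrable M A (\<lambda>x. cnj (f x))"
  unfolding set_integrable_def by (drule integrable_cnj) (simp add: scaleR_conv_of_real)

lemma set_integral_cnj: "(LINT x:A|M. cnj (f x)) = cnj (LINT x:A|M. f x)"
  using Bochner_Integration.integral_cnj[of M "\<lambda>x. indicat_real A x *\<^sub>R f x"]
  by (simp add: set_lebesgue_integral_def scaleR_conv_of_real)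

lemma set_integrable_continuous_interval:
  fixes f :: "real \<Rightarrow> 'a::{banach, second_countable_topology}"
  shows "continuous_on {a..b} f \<Longrightarrow> set_integrable lborel {a..b} f"
  unfolding set_integrable_def by (rule borel_integrable_compact) auto

lemma set_integral_cis_2pi_int:
  "(LINT t:{0..1}|lborel. cis (2 * pi * of_int m * t)) = (if m = 0 then 1 else 0)"
proof (cases "m = 0")
  case True
  then show ?thesis by (simp add: set_lebesgue_integral_def scaleR_conv_of_real content_real)
next
  case False
  define a where "a = 2 * pi * of_int m"
  have "a \<noteq> 0" using False by (simp add: a_def)
  have "((\<lambda>t. cis (a * t) / (\<i> * of_real a)) has_vector_derivative cis (a * x)) (at x within {0..1})"
    for x
    using has_vector_derivative_divide[OF cis_has_vector_derivative[of a x "{0..1}"], of "\<i> * of_real a"] \<open>a \<noteq> 0\<close>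
    by simp
  from fundamental_theorem_of_calculus[OF _ this]
  have "((\<lambda>t. cis (a * t)) has_integral (cis a - 1) / (\<i> * of_real a)) {0..1}"
    by (simp add: diff_divide_distrib)
  moreover have "cis a = 1"
    unfolding a_def by (metis cis_multiple_2pi Ints_of_int mult.commute mult.left_commute)
  ultimately have "integral {0..1} (\<lambda>t. cis (a * t)) = 0"
    by (simp add: integral_unique)
  moreover have "set_integrable lborel {0..1::real} (\<lambda>t. cis (a * t))"
    by (intro set_integrable_continuous_interval continuous_intros)
  ultimately have "(LINT t:{0..1}|lborel. cis (a * t)) = 0"
    using set_borel_integral_eq_integral(2) by metis
  then show ?thesis using False by (simp add: a_def)
qed

lemma L2_mult_bounded_continuous:
  assumes "L2 q" "continuous_on UNIV h" "\<And>t. cmod (h t) \<le> 1"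
  shows "set_integrable lborel {0..1::real} (\<lambda>t. q t * h t)"
proof (rule set_integrable_bound)
  show "set_integrable lborel {0..1::real} (\<lambda>t. 1 + (cmod (q t))\<^sup>2)"
    using assms(1) unfolding L2_def
    by (intro set_integral_add(1)) (auto intro: set_integrable_continuous_interval)
  have "(\<lambda>x. indicat_real {0..1} x *\<^sub>R q x * h x) \<in> borel_measurable lborel"
    using assms(1,2) unfolding L2_def set_borel_measurable_def
    by (intro borel_measurable_times) (auto intro: borel_measurable_continuous_onI)
  then show "set_borel_measurable lborel {0..1} (\<lambda>t. q t * h t)"
    unfolding set_borel_measurable_def by (simp add: mult.assoc)
  show "AE x in lborel. x \<in> {0..1} \<longrightarrow> cmod (q x * h x) \<le> norm (1 + (cmod (q x))\<^sup>2)"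
  proof (intro AE_I2 impI)
    fix x
    have "cmod (q x * h x) \<le> cmod (q x)"
      using assms(3)[of x] unfolding norm_mult by (simp add: mult_left_le)
    also have "\<dots> \<le> 1 + (cmod (q x))\<^sup>2"
    proof -
      have "2 * cmod (q x) \<le> (cmod (q x))\<^sup>2 + 1"
        using zero_le_power2[of "cmod (q x) - 1"] by (simp add: power2_diff)
      then show ?thesis using norm_ge_zero[of "q x"] by linarith
    qed
    finally show "cmod (q x * h x) \<le> norm (1 + (cmod (q x))\<^sup>2)" by simp
  qed
qed

text \<open>Trigonometric polynomials of degree N are indexed by \<open>j \<in> {0..2N}\<close>, standing for the
  frequency \<open>k = j - N\<close>.\<close>

definition freq :: "nat \<Rightarrow> nat \<Rightarrow> real" where
  "freq N j = 2 * pi * (real j - real N)"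

definition trig_poly :: "nat \<Rightarrow> (nat \<Rightarrow> complex) \<Rightarrow> real \<Rightarrow> complex" where
  "trig_poly N c x = (\<Sum>j\<le>2*N. c j * cis (freq N j * x))"

definition fourier_coeff :: "nat \<Rightarrow> (real \<Rightarrow> complex) \<Rightarrow> nat \<Rightarrow> complex" where
  "fourier_coeff N q j = (LINT t:{0..1}|lborel. q t * cis (- freq N j * t))"

lemma continuous_on_trig_poly: "continuous_on A (trig_poly N c)"
  unfolding trig_poly_def by (intro continuous_intros)

lemma L2_trig_poly: "L2 (trig_poly N c)"
proof -
  have "set_borel_measurable borel {0..1} (trig_poly N c)"
    by (intro set_measurable_continuous_on continuous_on_trig_poly) auto
  then show ?thesis
    unfolding L2_def set_borel_measurable_def
    by (auto intro!: set_integrable_continuous_interval continuous_intros continuous_on_trig_poly)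
qed

lemma fourier_coeff_trig_poly:
  assumes "j \<le> 2*N"
  shows "fourier_coeff N (trig_poly N c) j = c j"
proof -
  have "trig_poly N c t * cis (- freq N j * t) =
        (\<Sum>i\<le>2*N. c i * cis (2 * pi * of_int (int i - int j) * t))" for t
    unfolding trig_poly_def sum_distrib_right
    by (intro sum.cong refl) (simp add: mult.assoc cis_mult freq_def algebra_simps)
  then have "fourier_coeff N (trig_poly N c) j =
             (\<Sum>i\<le>2*N. LINT t:{0..1}|lborel. c i * cis (2 * pi * of_int (int i - int j) * t))"
    unfolding fourier_coeff_def
    by (simp only:) (rule set_integral_sum, auto intro!: set_integrable_continuous_interval continuous_intros)
  also have "\<dots> = (\<Sum>i\<le>2*N. c i * (if int i - int j = 0 then 1 else 0))"
    by (simp only: set_integral_mult_right set_integral_cis_2pi_int)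
  also have "\<dots> = c j" using assms by (simp add: if_distrib cong: if_cong)
  finally show ?thesis .
qed

lemma inner_trig_poly_expand:
  "cnj (q t) * trig_poly N c t = (\<Sum>j\<le>2*N. c j * cnj (q t * cis (- freq N j * t)))"
  unfolding trig_poly_def sum_distrib_left by (intro sum.cong refl) (simp add: cis_cnj)

lemma set_integrable_inner_trig_poly:
  "L2 q \<Longrightarrow> set_integrable lborel {0..1} (\<lambda>t. cnj (q t) * trig_poly N c t)"
  unfolding inner_trig_poly_expand
  by (intro set_integrable_sum set_integrable_mult_right set_integrable_cnj L2_mult_bounded_continuous)
     (auto intro!: continuous_intros)

lemma inner_trig_poly:
  assumes "L2 q"
  shows "(LINT t:{0..1}|lborel. cnj (q t) * trig_poly N c t) =
         (\<Sum>j\<le>2*N. c j * cnj (fourier_coeff N q j))"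
proof -
  have "(LINT t:{0..1}|lborel. cnj (q t) * trig_poly N c t) =
        (\<Sum>j\<le>2*N. LINT t:{0..1}|lborel. c j * cnj (q t * cis (- freq N j * t)))"
    unfolding inner_trig_poly_expand
    by (rule set_integral_sum)
       (intro set_integrable_mult_right set_integrable_cnj L2_mult_bounded_continuous assms;
        auto intro!: continuous_intros)
  then show ?thesis by (simp only: set_integral_mult_right set_integral_cnj fourier_coeff_def)
qed

lemma sum_cnj_mult_self:
  "(\<Sum>j\<in>A. c j * cnj (c j)) = complex_of_real (\<Sum>j\<in>A. (cmod (c j))\<^sup>2)"
  by (simp only: of_real_sum complex_norm_square)

lemma inner_self_trig_poly:
  "(LINT t:{0..1}|lborel. cnj (q t) * trig_poly N (fourier_coeff N q) t) =
   complex_of_real (\<Sum>j\<le>2*N. (cmod (fourier_coeff N q j))\<^sup>2)" if "L2 q"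
  using that by (simp only: inner_trig_poly sum_cnj_mult_self)

lemma l2normsq_trig_poly: "l2normsq (trig_poly N c) = (\<Sum>j\<le>2*N. (cmod (c j))\<^sup>2)"
proof -
  have "l2normsq (trig_poly N c) = (LINT t:{0..1}|lborel. Re (cnj (trig_poly N c t) * trig_poly N c t))"
    unfolding l2normsq_def
    by (intro set_lebesgue_integral_cong) (auto simp: complex_norm_square[symmetric] mult.commute)
  also have "\<dots> = Re (\<Sum>j\<le>2*N. c j * cnj (fourier_coeff N (trig_poly N c) j))"
    by (simp only: set_integral_Re[OF set_integrable_inner_trig_poly[OF L2_trig_poly]]
        inner_trig_poly[OF L2_trig_poly])
  also have "\<dots> = Re (\<Sum>j\<le>2*N. c j * cnj (c j))"
    by (simp add: fourier_coeff_trig_poly)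
  also have "\<dots> = (\<Sum>j\<le>2*N. (cmod (c j))\<^sup>2)"
    by (simp only: sum_cnj_mult_self Re_complex_of_real)
  finally show ?thesis .
qed

lemma cmod_diff_power2: "(cmod (a - b))\<^sup>2 = (cmod a)\<^sup>2 - 2 * Re (cnj a * b) + (cmod b)\<^sup>2"
  unfolding cmod_power2 by (simp add: power2_eq_square algebra_simps)

text \<open>Bessel: integrate \<open>0 \<le> |q - T|\<^sup>2\<close> for T the trigonometric polynomial with the Fourier
  coefficients of q.\<close>

lemma bessel_inequality:
  assumes "L2 q"
  shows "(\<Sum>j\<le>2*N. (cmod (fourier_coeff N q j))\<^sup>2) \<le> l2normsq q"
proof -
  define T where "T = trig_poly N (fourier_coeff N q)"
  have int_inner: "set_integrable lborel {0..1} (\<lambda>t. Re (cnj (q t) * T t))"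
    unfolding T_def by (rule set_integrable_Re[OF set_integrable_inner_trig_poly[OF assms]])
  have int_T: "set_integrable lborel {0..1::real} (\<lambda>t. (cmod (T t))\<^sup>2)"
    using L2_trig_poly by (simp add: L2_def T_def)
  have "(LINT t:{0..1}|lborel. 2 * Re (cnj (q t) * T t) - (cmod (T t))\<^sup>2) \<le> l2normsq q"
    unfolding l2normsq_def
  proof (rule set_integral_mono)
    show "set_integrable lborel {0..1} (\<lambda>t. 2 * Re (cnj (q t) * T t) - (cmod (T t))\<^sup>2)"
      by (intro set_integral_diff(1) set_integrable_mult_right int_inner int_T)
    show "set_integrable lborel {0..1} (\<lambda>t. (cmod (q t))\<^sup>2)"
      using assms by (simp add: L2_def)
    fix t
    show "2 * Re (cnj (q t) * T t) - (cmod (T t))\<^sup>2 \<le> (cmod (q t))\<^sup>2"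
      using zero_le_power2[of "cmod (q t - T t)"] unfolding cmod_diff_power2 by linarith
  qed
  also have "(LINT t:{0..1}|lborel. 2 * Re (cnj (q t) * T t) - (cmod (T t))\<^sup>2) =
             2 * Re (LINT t:{0..1}|lborel. cnj (q t) * T t) - l2normsq T"
    unfolding l2normsq_def
    by (subst set_integral_diff(2), intro set_integrable_mult_right int_inner, rule int_T)
       (simp only: set_integral_mult_right set_integral_Re[OF set_integrable_inner_trig_poly[OF assms]]
         T_def)
  finally show ?thesis
    unfolding T_def inner_self_trig_poly[OF assms] l2normsq_trig_poly by simp
qed

lemma dirichlet_eq_trig_poly: "dirichlet N s = (\<Sum>j\<le>2*N. cis (freq N j * s))"
proof -
  have inj: "inj_on (\<lambda>j::nat. int j - int N) {..2*N}" by (auto simp: inj_on_def)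
  have "(\<lambda>j::nat. int j - int N) ` {..2*N} = {- int N..int N}"
  proof
    show "{- int N..int N} \<subseteq> (\<lambda>j::nat. int j - int N) ` {..2*N}"
    proof
      fix k assume "k \<in> {- int N..int N}"
      then have "k = int (nat (k + int N)) - int N" "nat (k + int N) \<in> {..2*N}" by auto
      then show "k \<in> (\<lambda>j::nat. int j - int N) ` {..2*N}" by blast
    qed
  qed auto
  then have "dirichlet N s = (\<Sum>k\<in>(\<lambda>j::nat. int j - int N) ` {..2*N}. cis (2 * pi * of_int k * s))"
    unfolding dirichlet_def by simp
  also have "\<dots> = (\<Sum>j\<le>2*N. cis (2 * pi * of_int (int j - int N) * s))"
    by (rule sum.reindex[OF inj, unfolded comp_def])
  finally show ?thesis by (simp add: freq_def)
qed

lemma Phi_adj_eq_trig_poly: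
  assumes "L2 q"
  shows "Phi_adj N q = trig_poly N (fourier_coeff N q)"
proof
  fix x
  have "cnj (feat N x t) * q t = (\<Sum>j\<le>2*N. cis (freq N j * x) * (q t * cis (- freq N j * t)))" for t
    unfolding feat_def dirichlet_eq_trig_poly cnj_sum sum_distrib_right
    by (intro sum.cong refl) (simp add: cis_cnj cis_mult algebra_simps)
  then have "Phi_adj N q x =
      (\<Sum>j\<le>2*N. LINT t:{0..1}|lborel. cis (freq N j * x) * (q t * cis (- freq N j * t)))"
    unfolding Phi_adj_def innerH_def
    by (simp only:) (rule set_integral_sum,
        intro set_integrable_mult_right L2_mult_bounded_continuous assms;
        auto intro!: continuous_intros)
  also have "\<dots> = (\<Sum>j\<le>2*N. cis (freq N j * x) * fourier_coeff N q j)"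
    by (simp add: fourier_coeff_def)
  finally show "Phi_adj N q x = trig_poly N (fourier_coeff N q) x"
    by (simp add: trig_poly_def mult.commute)
qed

definition trig_poly_deriv :: "nat \<Rightarrow> (nat \<Rightarrow> complex) \<Rightarrow> nat \<Rightarrow> real \<Rightarrow> complex" where
  "trig_poly_deriv N c s x = (\<Sum>j\<le>2*N. c j * (\<i> * of_real (freq N j))^s * cis (freq N j * x))"

lemma trig_poly_deriv_0: "trig_poly_deriv N c 0 = trig_poly N c"
  by (simp add: trig_poly_deriv_def trig_poly_def fun_eq_iff)

lemma trig_poly_deriv_has_vector_derivative:
  "(trig_poly_deriv N c s has_vector_derivative trig_poly_deriv N c (Suc s) x) (at x)"
  unfolding trig_poly_deriv_def
  by (rule derivative_eq_intros cis_has_vector_derivative refl | simp add: algebra_simps)+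

lemma hderiv_trig_poly: "hderiv s (trig_poly N c) = trig_poly_deriv N c s"
  by (induction s)
     (simp_all add: trig_poly_deriv_0 vector_derivative_at[OF trig_poly_deriv_has_vector_derivative])

lemma trig_poly_deriv_cong:
  "(\<And>j. j \<le> 2*N \<Longrightarrow> c j = c' j) \<Longrightarrow> trig_poly_deriv N c s x = trig_poly_deriv N c' s x"
  unfolding trig_poly_deriv_def by (intro sum.cong refl) auto

lemma trig_poly_deriv_add_scaled:
  "trig_poly_deriv N (\<lambda>j. a j + t * b j) s x = trig_poly_deriv N a s x + t * trig_poly_deriv N b s x"
  unfolding trig_poly_deriv_def by (simp add: sum.distrib sum_distrib_left algebra_simps)

lemma trig_poly_deriv_diff:
  "trig_poly_deriv N (\<lambda>j. a j - b j) s x = trig_poly_deriv N a s x - trig_poly_deriv N b s x"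
  unfolding trig_poly_deriv_def by (simp add: sum_subtractf algebra_simps)

definition one_coeffs :: "nat \<Rightarrow> nat \<Rightarrow> complex" where
  "one_coeffs N j = (if j = N then 1 else 0)"

lemma trig_poly_deriv_one_coeffs:
  "trig_poly_deriv N (one_coeffs N) s x = (if s = 0 then 1 else 0)"
proof -
  have "trig_poly_deriv N (one_coeffs N) s x =
        (\<Sum>j\<le>2*N. if j = N then (\<i> * of_real (freq N N))^s * cis (freq N N * x) else 0)"
    unfolding trig_poly_deriv_def by (rule sum.cong) (auto simp: one_coeffs_def)
  then show ?thesis by (simp add: freq_def)
qed

lemma trig_poly_on_line:
  "trig_poly N (\<lambda>j. one_coeffs N j + t * \<gamma> j) x = 1 + t * trig_poly N \<gamma> x"
  using trig_poly_deriv_add_scaled[of N "one_coeffs N" t \<gamma> 0 x] trig_poly_deriv_one_coeffs[of N 0 x]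
  by (simp add: trig_poly_deriv_0)

lemma cmod_add_power2: "(cmod (a + b))\<^sup>2 = (cmod a)\<^sup>2 + 2 * Re (cnj a * b) + (cmod b)\<^sup>2"
  unfolding cmod_power2 by (simp add: power2_eq_square algebra_simps)

lemma sum_norm_sq_on_line:
  assumes "\<gamma> N = complex_of_real g0" and "S = (\<Sum>j\<le>2*N. (cmod (\<gamma> j))\<^sup>2)" and "S > 0"
  shows "(\<Sum>j\<le>2*N. (cmod (one_coeffs N j + t * \<gamma> j))\<^sup>2) =
         1 - g0\<^sup>2 / S + S * (cmod (t + of_real (g0 / S)))\<^sup>2"
proof -
  have "(\<Sum>j\<le>2*N. (cmod (one_coeffs N j + t * \<gamma> j))\<^sup>2) =
        (\<Sum>j\<le>2*N. (cmod (one_coeffs N j))\<^sup>2) +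
        2 * (\<Sum>j\<le>2*N. Re (cnj (one_coeffs N j) * (t * \<gamma> j))) +
        (\<Sum>j\<le>2*N. (cmod t)\<^sup>2 * (cmod (\<gamma> j))\<^sup>2)"
    unfolding cmod_add_power2 by (simp add: sum.distrib sum_distrib_left norm_mult power_mult_distrib)
  also have "(\<Sum>j\<le>2*N. (cmod (one_coeffs N j))\<^sup>2) = (\<Sum>j\<le>2*N. if j = N then 1 else 0)"
    by (rule sum.cong) (auto simp: one_coeffs_def)
  also have "\<dots> = 1" by simp
  also have "(\<Sum>j\<le>2*N. Re (cnj (one_coeffs N j) * (t * \<gamma> j))) =
             (\<Sum>j\<le>2*N. if j = N then Re (t * \<gamma> N) else 0)"
    by (rule sum.cong) (auto simp: one_coeffs_def)
  also have "\<dots> = g0 * Re t" by (simp add: assms(1))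
  also have "(\<Sum>j\<le>2*N. (cmod t)\<^sup>2 * (cmod (\<gamma> j))\<^sup>2) = (cmod t)\<^sup>2 * S"
    by (simp add: assms(2) sum_distrib_left)
  also have "1 + 2 * (g0 * Re t) + (cmod t)\<^sup>2 * S = 1 - g0\<^sup>2 / S + S * (cmod (t + of_real (g0 / S)))\<^sup>2"
    using assms(3) unfolding cmod_power2 by (simp add: power2_eq_square field_simps)
  finally show ?thesis .
qed

lemma sum_norm_sq_pos:
  fixes N :: nat
  assumes "\<gamma> N = complex_of_real g0" "g0 > 0"
  shows "(\<Sum>j\<le>2*N. (cmod (\<gamma> j))\<^sup>2) > 0"
proof -
  have "(cmod (\<gamma> N))\<^sup>2 \<le> (\<Sum>j\<le>2*N. (cmod (\<gamma> j))\<^sup>2)" by (rule member_le_sum) auto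
  moreover have "(cmod (\<gamma> N))\<^sup>2 > 0" using assms by simp
  ultimately show ?thesis by linarith
qed

text \<open>Bessel's inequality reduces the minimisation of the norm to that of a quadratic in t, whose
  unique minimiser is \<open>t = -g0/S\<close>.\<close>

lemma minimal_norm_on_coefficient_line:
  fixes adm :: "(real \<Rightarrow> complex) \<Rightarrow> bool"
  assumes adm: "\<And>q. adm q \<longleftrightarrow> L2 q \<and>
                   (\<exists>t. \<forall>j\<le>2*N. fourier_coeff N q j = one_coeffs N j + t * \<gamma> j)"
    and \<gamma>N: "\<gamma> N = complex_of_real g0" and "g0 > 0"
    and S: "S = (\<Sum>j\<le>2*N. (cmod (\<gamma> j))\<^sup>2)"
  shows "\<exists>p. adm p \<and> (\<forall>q. adm q \<longrightarrow> l2normsq p \<le> l2normsq q)"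
    and "adm p \<and> (\<forall>q. adm q \<longrightarrow> l2normsq p \<le> l2normsq q) \<Longrightarrow>
         Phi_adj N p x = 1 - complex_of_real (g0 / S) * trig_poly N \<gamma> x"
proof -
  have "S > 0" unfolding S using sum_norm_sq_pos[of \<gamma> N g0, OF \<gamma>N \<open>g0 > 0\<close>] .
  define t0 where "t0 = - complex_of_real (g0 / S)"
  define F where "F t = (\<Sum>j\<le>2*N. (cmod (one_coeffs N j + t * \<gamma> j))\<^sup>2)" for t
  have F: "F t = 1 - g0\<^sup>2 / S + S * (cmod (t - t0))\<^sup>2" for t
    unfolding F_def t0_def using sum_norm_sq_on_line[OF \<gamma>N S \<open>S > 0\<close>] by simp
  have F_le: "F t \<le> l2normsq q"
    if "adm q" "\<forall>j\<le>2*N. fourier_coeff N q j = one_coeffs N j + t * \<gamma> j" for q t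
    using bessel_inequality[of q N] that adm unfolding F_def by simp
  define p0 where "p0 = trig_poly N (\<lambda>j. one_coeffs N j + t0 * \<gamma> j)"
  have p0: "adm p0" "l2normsq p0 = F t0"
    unfolding adm p0_def F_def l2normsq_trig_poly
    using L2_trig_poly fourier_coeff_trig_poly by auto
  show "\<exists>p. adm p \<and> (\<forall>q. adm q \<longrightarrow> l2normsq p \<le> l2normsq q)"
  proof (intro exI conjI allI impI)
    fix q assume "adm q"
    then obtain t where "\<forall>j\<le>2*N. fourier_coeff N q j = one_coeffs N j + t * \<gamma> j"
      using adm by blast
    with F_le[OF \<open>adm q\<close>] have "F t \<le> l2normsq q" by blast
    moreover have "S * (cmod (t - t0))\<^sup>2 \<ge> 0" using \<open>S > 0\<close> by simp
    ultimately show "l2normsq p0 \<le> l2normsq q"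
      using F[of t] F[of t0] p0(2) by simp
  qed (rule p0(1))
  assume p: "adm p \<and> (\<forall>q. adm q \<longrightarrow> l2normsq p \<le> l2normsq q)"
  then obtain t where t: "\<forall>j\<le>2*N. fourier_coeff N p j = one_coeffs N j + t * \<gamma> j"
    using adm by blast
  have "F t \<le> F t0" using F_le[OF conjunct1[OF p] t] p p0 by auto
  then have "t = t0" using F[of t] F[of t0] \<open>S > 0\<close> by (simp add: mult_le_0_iff)
  have "Phi_adj N p x = trig_poly N (\<lambda>j. one_coeffs N j + t0 * \<gamma> j) x"
    using p t \<open>t = t0\<close> adm Phi_adj_eq_trig_poly by (simp add: trig_poly_def)
  then show "Phi_adj N p x = 1 - complex_of_real (g0 / S) * trig_poly N \<gamma> x"
    unfolding trig_poly_on_line by (simp add: t0_def)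
qed

text \<open>Substituting \<open>w = e(x)\<close> turns \<open>e(Nx) trig_poly N d x\<close> into the polynomial
  \<open>coeff_poly N d\<close> of degree at most 2N.\<close>

definition coeff_poly :: "nat \<Rightarrow> (nat \<Rightarrow> complex) \<Rightarrow> complex poly" where
  "coeff_poly N d = (\<Sum>j\<le>2*N. monom (d j) j)"

lemma poly_coeff_poly: "poly (coeff_poly N d) w = (\<Sum>j\<le>2*N. d j * w^j)"
  by (simp add: coeff_poly_def poly_sum poly_monom)

lemma coeff_coeff_poly: "j \<le> 2*N \<Longrightarrow> coeff (coeff_poly N d) j = d j"
  unfolding coeff_poly_def by (rule coeff_sum_monom)

lemma degree_coeff_poly: "degree (coeff_poly N d) \<le> 2*N"
  unfolding coeff_poly_def by (rule degree_sum_le) (auto intro: order.trans[OF degree_monom_le])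

lemma poly_pderiv_coeff_poly:
  "poly (pderiv (coeff_poly N d)) w * w = (\<Sum>j\<le>2*N. d j * of_nat j * w^j)"
proof -
  have "((\<lambda>w. \<Sum>j\<le>2*N. d j * w^j) has_field_derivative (\<Sum>j\<le>2*N. d j * (of_nat j * w^(j-1)))) (at w)"
    by (rule derivative_eq_intros refl)+ (simp add: mult_ac)
  moreover have "poly (coeff_poly N d) = (\<lambda>w. \<Sum>j\<le>2*N. d j * w^j)"
    by (simp add: fun_eq_iff poly_coeff_poly)
  ultimately have e: "poly (pderiv (coeff_poly N d)) w = (\<Sum>j\<le>2*N. d j * (of_nat j * w^(j-1)))"
    using poly_DERIV DERIV_unique by metis
  show ?thesis
    unfolding e sum_distrib_right
  proof (intro sum.cong refl)
    fix j show "d j * (of_nat j * w ^ (j - 1)) * w = d j * of_nat j * w ^ j"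
      by (cases j) (simp_all add: algebra_simps)
  qed
qed

lemma cis_freq: "cis (freq N j * x) = cis (- 2 * pi * real N * x) * cis (2 * pi * x) ^ j"
proof -
  have "cis (- 2 * pi * real N * x) * cis (2 * pi * x) ^ j =
        cis (- 2 * pi * real N * x + real j * (2 * pi * x))"
    unfolding Complex.DeMoivre cis_mult ..
  also have "- 2 * pi * real N * x + real j * (2 * pi * x) = freq N j * x"
    by (simp add: freq_def algebra_simps)
  finally show ?thesis by simp
qed

lemma trig_poly_deriv_0_eq_poly:
  "trig_poly_deriv N d 0 x = cis (- 2 * pi * real N * x) * poly (coeff_poly N d) (cis (2 * pi * x))"
  unfolding trig_poly_deriv_def poly_coeff_poly cis_freq sum_distrib_left
  by (intro sum.cong refl) (simp add: algebra_simps)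

lemma trig_poly_deriv_1_eq_poly:
  "trig_poly_deriv N d 1 x = \<i> * 2 * of_real pi * cis (- 2 * pi * real N * x) *
     (poly (pderiv (coeff_poly N d)) (cis (2 * pi * x)) * cis (2 * pi * x) -
      of_nat N * poly (coeff_poly N d) (cis (2 * pi * x)))"
  unfolding poly_pderiv_coeff_poly poly_coeff_poly trig_poly_deriv_def cis_freq
    sum_distrib_left right_diff_distrib sum_subtractf[symmetric]
  by (intro sum.cong refl) (simp add: freq_def algebra_simps)

lemma double_root_iff_dvd:
  fixes P :: "'a::idom poly"
  shows "poly P a = 0 \<and> poly (pderiv P) a = 0 \<longleftrightarrow> [:-a, 1:]^2 dvd P"
proof
  assume roots: "poly P a = 0 \<and> poly (pderiv P) a = 0"
  then obtain R where R: "P = [:-a, 1:] * R" using poly_eq_0_iff_dvd by blast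
  have "poly (pderiv P) a = poly R a" unfolding R pderiv_mult by (simp add: pderiv_pCons)
  then have "poly R a = 0" using roots by simp
  then obtain Q where Q: "R = [:-a, 1:] * Q" using poly_eq_0_iff_dvd by blast
  have "P = [:-a, 1:]^2 * Q" by (simp only: R Q power2_eq_square mult.assoc)
  then show "[:-a, 1:]^2 dvd P" by simp
next
  assume "[:-a, 1:]^2 dvd P"
  then obtain Q where Q: "P = [:-a, 1:]^2 * Q" by blast
  have "pderiv [:-a, 1:] = 1" by (simp add: pderiv_pCons)
  then have "poly (pderiv P) a = 0"
    unfolding Q power2_eq_square mult.assoc pderiv_mult by simp
  then show "poly P a = 0 \<and> poly (pderiv P) a = 0" by (simp add: Q)
qed

lemma prod_double_roots_dvd:
  fixes P :: "'a::idom poly"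
  assumes "finite I" "inj_on w I" "\<forall>i\<in>I. poly P (w i) = 0 \<and> poly (pderiv P) (w i) = 0"
  shows "(\<Prod>i\<in>I. [:-w i, 1:]^2) dvd P"
  using assms
proof (induction I arbitrary: P rule: finite_induct)
  case (insert i I)
  obtain Q where Q: "P = [:-w i, 1:]^2 * Q"
    using double_root_iff_dvd insert.prems(2) by blast
  have "poly Q (w k) = 0 \<and> poly (pderiv Q) (w k) = 0" if k: "k \<in> I" for k
  proof -
    have ne: "w k \<noteq> w i" using insert.prems(1) insert.hyps(2) k by (auto simp: inj_on_def)
    have "poly P (w k) = 0" "poly (pderiv P) (w k) = 0" using insert.prems(2) k by auto
    then show ?thesis using ne by (simp add: Q pderiv_mult)
  qed
  then have "(\<Prod>i\<in>I. [:-w i, 1:]^2) dvd Q"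
    using insert.IH insert.prems(1) by (meson inj_on_insert)
  then show ?case using insert.hyps by (simp add: Q)
qed simp

definition unit_root :: "(nat \<Rightarrow> real) \<Rightarrow> nat \<Rightarrow> complex" where
  "unit_root z i = cis (2 * pi * z i)"

definition double_root_poly :: "nat \<Rightarrow> (nat \<Rightarrow> real) \<Rightarrow> complex poly" where
  "double_root_poly N z = (\<Prod>i<N. [:- unit_root z i, 1:]^2)"

text \<open>The scaling by \<open>\<Prod> -4 e(z\<^sub>i)\<close> makes the trigonometric polynomial of the kernel
  element real and nonnegative, see \<open>trig_poly_kernel_V\<close>.\<close>

definition double_root_scale :: "nat \<Rightarrow> (nat \<Rightarrow> real) \<Rightarrow> complex" where
  "double_root_scale N z = (\<Prod>i<N. - 4 * unit_root z i)"

definition kernel_V :: "nat \<Rightarrow> (nat \<Rightarrow> real) \<Rightarrow> nat \<Rightarrow> complex" where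
  "kernel_V N z j = coeff (double_root_poly N z) j / double_root_scale N z"

definition sin_sq_prod :: "nat \<Rightarrow> (nat \<Rightarrow> real) \<Rightarrow> real \<Rightarrow> real" where
  "sin_sq_prod N z x = (\<Prod>i<N. (sin (pi * (x - z i)))\<^sup>2)"

lemma double_root_poly_nonzero: "double_root_poly N z \<noteq> 0"
  by (simp add: double_root_poly_def prod_zero_iff)

lemma degree_double_root_poly: "degree (double_root_poly N z) = 2 * N"
  unfolding double_root_poly_def
  by (subst degree_prod_sum_eq) (simp_all add: degree_linear_power)

lemma double_root_scale_nonzero: "double_root_scale N z \<noteq> 0"
  by (simp add: double_root_scale_def unit_root_def prod_zero_iff)

lemma coeff_poly_kernel_V:
  "coeff_poly N (kernel_V N z) = smult (inverse (double_root_scale N z)) (double_root_poly N z)"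
proof -
  have "poly (coeff_poly N (kernel_V N z)) w = poly (double_root_poly N z) w / double_root_scale N z" for w
    unfolding poly_coeff_poly kernel_V_def poly_altdef[of "double_root_poly N z"]
      degree_double_root_poly sum_divide_distrib
    by (intro sum.cong refl) simp
  then show ?thesis by (simp add: poly_eq_poly_eq_iff[symmetric] fun_eq_iff field_simps)
qed

lemma kernel_V_interpolates:
  assumes "i < N"
  shows "trig_poly_deriv N (kernel_V N z) 0 (z i) = 0 \<and> trig_poly_deriv N (kernel_V N z) 1 (z i) = 0"
proof -
  have "[:- unit_root z i, 1:]^2 dvd coeff_poly N (kernel_V N z)"
    unfolding coeff_poly_kernel_V double_root_poly_def using assms
    by (intro dvd_smult dvd_prodI) auto
  then show ?thesis
    unfolding trig_poly_deriv_0_eq_poly trig_poly_deriv_1_eq_poly double_root_iff_dvd[symmetric]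
    by (simp add: unit_root_def)
qed

text \<open>A coefficient vector whose trigonometric polynomial has double zeros at all \<open>z\<^sub>i\<close> gives a
  polynomial of degree at most 2N divisible by \<open>double_root_poly\<close>, which has degree 2N.\<close>

lemma kernel_V_spans:
  assumes inj: "inj_on (unit_root z) {..<N}"
    and zeros: "\<forall>i<N. trig_poly_deriv N d 0 (z i) = 0 \<and> trig_poly_deriv N d 1 (z i) = 0"
  shows "\<exists>t. \<forall>j\<le>2*N. d j = t * kernel_V N z j"
proof -
  have "\<forall>i\<in>{..<N}. poly (coeff_poly N d) (unit_root z i) = 0 \<and>
                   poly (pderiv (coeff_poly N d)) (unit_root z i) = 0"
    using zeros
    unfolding trig_poly_deriv_0_eq_poly trig_poly_deriv_1_eq_poly unit_root_def by auto
  then have "double_root_poly N z dvd coeff_poly N d"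
    unfolding double_root_poly_def by (intro prod_double_roots_dvd[OF _ inj]) simp
  then obtain Q where Q: "coeff_poly N d = double_root_poly N z * Q" by blast
  have "degree Q = 0"
  proof (cases "Q = 0")
    case False
    then show ?thesis
      using degree_coeff_poly[of N d] double_root_poly_nonzero
      by (simp add: Q degree_mult_eq degree_double_root_poly)
  qed simp
  then have Qc: "Q = [:coeff Q 0:]" using degree_0_id by metis
  have "d j = coeff Q 0 * double_root_scale N z * kernel_V N z j" if "j \<le> 2*N" for j
  proof -
    have "d j = coeff Q 0 * coeff (double_root_poly N z) j"
      using coeff_coeff_poly[OF that, of d] unfolding Q by (subst (asm) Qc) simp
    then show ?thesis using double_root_scale_nonzero by (simp add: kernel_V_def)
  qed
  then show ?thesis by blast
qed

lemma cis_minus_cis_neg: "cis u - cis (- u) = 2 * \<i> * complex_of_real (sin u)"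
  by (simp add: complex_eq_iff)

lemma double_root_factor_eq_sin_sq:
  "cis (- 2 * pi * x) * (cis (2 * pi * x) - cis (2 * pi * y))\<^sup>2 / (- 4 * cis (2 * pi * y)) =
   complex_of_real ((sin (pi * (x - y)))\<^sup>2)"
proof -
  define u where "u = pi * (x - y)"
  define v where "v = pi * (x + y)"
  define U where "U = cis u"
  define V where "V = cis v"
  define s where "s = complex_of_real (sin u)"
  have "U \<noteq> 0" "V \<noteq> 0" by (simp_all add: U_def V_def)
  have "v + u = 2 * pi * x" "v - u = 2 * pi * y" "- (v + u) = - 2 * pi * x"
    unfolding u_def v_def by algebra+
  then have "cis (2 * pi * x) = V * U" "cis (2 * pi * y) = V / U"
    "cis (- 2 * pi * x) = inverse (V * U)"
    unfolding U_def V_def cis_mult cis_divide cis_inverse by metis+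
  moreover have "V * U - V / U = V * (2 * \<i> * s)"
  proof -
    have e: "U - inverse U = 2 * \<i> * s"
      unfolding cis_minus_cis_neg[symmetric] U_def s_def cis_inverse ..
    show ?thesis unfolding e[symmetric] by (simp add: divide_inverse algebra_simps)
  qed
  ultimately have "cis (- 2 * pi * x) * (cis (2 * pi * x) - cis (2 * pi * y))\<^sup>2 /
                   (- 4 * cis (2 * pi * y)) =
                   inverse (V * U) * (V * (2 * \<i> * s))\<^sup>2 / (- 4 * (V / U))"
    by simp
  also have "\<dots> = s\<^sup>2" using \<open>U \<noteq> 0\<close> \<open>V \<noteq> 0\<close> by (simp add: field_simps power2_eq_square)
  finally show ?thesis by (simp add: s_def u_def)
qed

lemma trig_poly_kernel_V: "trig_poly N (kernel_V N z) x = complex_of_real (sin_sq_prod N z x)"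
proof -
  have "trig_poly N (kernel_V N z) x =
        cis (- 2 * pi * real N * x) * poly (double_root_poly N z) (cis (2 * pi * x)) /
        double_root_scale N z"
    unfolding trig_poly_deriv_0[symmetric] trig_poly_deriv_0_eq_poly coeff_poly_kernel_V
    by (simp add: field_simps)
  also have "cis (- 2 * pi * real N * x) = (\<Prod>i<N. cis (- 2 * pi * x))"
  proof -
    have "- 2 * pi * real N * x = real N * (- 2 * pi * x)" by simp
    then show ?thesis by (simp only: prod_constant card_lessThan Complex.DeMoivre)
  qed
  also have "(\<Prod>i<N. cis (- 2 * pi * x)) * poly (double_root_poly N z) (cis (2 * pi * x)) /
               double_root_scale N z =
             (\<Prod>i<N. cis (- 2 * pi * x) * (cis (2 * pi * x) - cis (2 * pi * z i))\<^sup>2 /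
                       (- 4 * cis (2 * pi * z i)))"
    unfolding double_root_poly_def double_root_scale_def unit_root_def poly_prod
      prod.distrib[symmetric] prod_dividef[symmetric]
    by simp
  also have "\<dots> = (\<Prod>i<N. complex_of_real ((sin (pi * (x - z i)))\<^sup>2))"
    by (intro prod.cong refl double_root_factor_eq_sin_sq)
  finally show ?thesis by (simp add: sin_sq_prod_def)
qed

lemma sin_pi_nonzero: "-1 < y \<Longrightarrow> y < 1 \<Longrightarrow> y \<noteq> 0 \<Longrightarrow> sin (pi * y) \<noteq> 0"
  by (auto simp: sin_zero_iff_int2)

lemma sin_sq_prod_pos:
  assumes "\<forall>i<N. z i \<in> {0..<1}" "x \<in> {0..<1}" "x \<notin> z ` {..<N}"
  shows "sin_sq_prod N z x > 0"
  unfolding sin_sq_prod_def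
proof (intro prod_pos)
  fix i assume i: "i \<in> {..<N}"
  then have "x \<noteq> z i" "z i \<in> {0..<1}" using assms(1,3) by auto
  then have "sin (pi * (x - z i)) \<noteq> 0" using assms(2) by (intro sin_pi_nonzero) auto
  then show "(sin (pi * (x - z i)))\<^sup>2 > 0" by simp
qed

lemma inj_on_unit_root:
  assumes "\<forall>i<N. z i \<in> {0..<1}" "inj_on z {..<N}"
  shows "inj_on (unit_root z) {..<N}"
proof (rule inj_onI)
  fix i k assume i: "i \<in> {..<N}" and k: "k \<in> {..<N}" and "unit_root z i = unit_root z k"
  then have "sin (pi * (z i - z k)) = 0"
    using double_root_factor_eq_sin_sq[of "z i" "z k"] by (simp add: unit_root_def)
  moreover have "z i \<in> {0..<1}" "z k \<in> {0..<1}" using assms(1) i k by auto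
  ultimately have "z i = z k" using sin_pi_nonzero[of "z i - z k"] by force
  then show "i = k" using assms(2) i k by (meson inj_onD)
qed

text \<open>Index N is frequency 0, so this coefficient is the mean of the trigonometric polynomial.\<close>

lemma kernel_V_N: "kernel_V N z N = complex_of_real (LINT x:{0..1}|lborel. sin_sq_prod N z x)"
proof -
  have "kernel_V N z N = fourier_coeff N (trig_poly N (kernel_V N z)) N"
    by (simp add: fourier_coeff_trig_poly)
  also have "\<dots> = (LINT t:{0..1}|lborel. complex_of_real (sin_sq_prod N z t))"
    unfolding fourier_coeff_def trig_poly_kernel_V by (simp add: freq_def)
  finally show ?thesis by (simp add: set_integral_complex_of_real)
qed

lemma mean_sin_sq_prod_pos:
  assumes "\<forall>i<N. z i \<in> {0..<1}"
  shows "(LINT x:{0..1}|lborel. sin_sq_prod N z x) > 0"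
proof -
  have cont: "continuous_on {0..1} (sin_sq_prod N z)"
    unfolding sin_sq_prod_def by (intro continuous_intros)
  have nonneg: "sin_sq_prod N z x \<ge> 0" for x
    unfolding sin_sq_prod_def by (intro prod_nonneg) simp
  have "infinite ({0<..<1::real} - z ` {..<N})"
    using infinite_Ioo[of "0::real" 1] by (simp add: Diff_infinite_finite)
  then obtain x0 where x0: "x0 \<in> {0<..<1::real}" "x0 \<notin> z ` {..<N}"
    using infinite_imp_nonempty by blast
  have "sin_sq_prod N z x0 > 0" using sin_sq_prod_pos[OF assms, of x0] x0 by auto
  moreover have "integral {0..1} (sin_sq_prod N z) \<noteq> 0"
  proof
    assume "integral {0..1} (sin_sq_prod N z) = 0"
    then have "(sin_sq_prod N z has_integral 0) (cbox 0 1)"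
      using integrable_continuous_interval[OF cont] has_integral_integral by (metis cbox_interval)
    then have "sin_sq_prod N z x0 = 0"
      by (rule has_integral_0_cbox_imp_0[rotated 2]) (use x0 cont nonneg in auto)
    with \<open>sin_sq_prod N z x0 > 0\<close> show False by simp
  qed
  moreover have "integral {0..1} (sin_sq_prod N z) \<ge> 0"
    using integrable_continuous_interval[OF cont] nonneg by (intro integral_nonneg) auto
  ultimately show ?thesis
    using set_borel_integral_eq_integral(2)[OF set_integrable_continuous_interval[OF cont]] by simp
qed

lemma interpolates_V_iff_on_line:
  assumes inj: "inj_on (unit_root z) {..<N}"
  shows "(\<forall>i<N. trig_poly_deriv N c 0 (z i) = 1 \<and> trig_poly_deriv N c 1 (z i) = 0) \<longleftrightarrow>
         (\<exists>t. \<forall>j\<le>2*N. c j = one_coeffs N j + t * kernel_V N z j)"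
proof
  assume "\<forall>i<N. trig_poly_deriv N c 0 (z i) = 1 \<and> trig_poly_deriv N c 1 (z i) = 0"
  then have "\<forall>i<N. trig_poly_deriv N (\<lambda>j. c j - one_coeffs N j) 0 (z i) = 0 \<and>
                   trig_poly_deriv N (\<lambda>j. c j - one_coeffs N j) 1 (z i) = 0"
    by (simp add: trig_poly_deriv_diff trig_poly_deriv_one_coeffs)
  from kernel_V_spans[OF inj this] show "\<exists>t. \<forall>j\<le>2*N. c j = one_coeffs N j + t * kernel_V N z j"
    by (metis diff_add_cancel add.commute)
next
  assume "\<exists>t. \<forall>j\<le>2*N. c j = one_coeffs N j + t * kernel_V N z j"
  then obtain t where "\<forall>j\<le>2*N. c j = one_coeffs N j + t * kernel_V N z j" by blast
  then have "trig_poly_deriv N c s x =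
             trig_poly_deriv N (one_coeffs N) s x + t * trig_poly_deriv N (kernel_V N z) s x" for s x
    by (simp add: trig_poly_deriv_cong[of N c] trig_poly_deriv_add_scaled)
  then show "\<forall>i<N. trig_poly_deriv N c 0 (z i) = 1 \<and> trig_poly_deriv N c 1 (z i) = 0"
    using kernel_V_interpolates by (simp add: trig_poly_deriv_one_coeffs)
qed

lemma admissible_V_iff_on_line:
  assumes "inj_on (unit_root z) {..<N}"
  shows "admissible_V N N z q \<longleftrightarrow>
         L2 q \<and> (\<exists>t. \<forall>j\<le>2*N. fourier_coeff N q j = one_coeffs N j + t * kernel_V N z j)"
proof (cases "L2 q")
  case True
  then show ?thesis
    unfolding admissible_V_def Phi_adj_eq_trig_poly[OF True] hderiv_trig_poly
    unfolding trig_poly_deriv_0[symmetric]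
    using interpolates_V_iff_on_line[OF assms] by simp
qed (simp add: admissible_V_def)

lemma vanishing_precertificate:
  assumes zin: "\<forall>i<N. z i \<in> {0..<1}" and "inj_on z {..<N}"
  shows "(\<exists>p. vanishing_precert_vec N N z p) \<and>
         (\<forall>p. vanishing_precert_vec N N z p \<longrightarrow>
            (\<forall>x\<in>{0..<1}. x \<notin> z ` {..<N} \<longrightarrow>
               Phi_adj N p x \<in> \<real> \<and> Re (Phi_adj N p x) < 1))"
proof -
  define g0 where "g0 = (LINT x:{0..1}|lborel. sin_sq_prod N z x)"
  define S where "S = (\<Sum>j\<le>2*N. (cmod (kernel_V N z j))\<^sup>2)"
  have \<gamma>N: "kernel_V N z N = complex_of_real g0" unfolding g0_def by (rule kernel_V_N)
  have "g0 > 0" unfolding g0_def by (rule mean_sin_sq_prod_pos[OF zin])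
  have "S > 0" unfolding S_def by (rule sum_norm_sq_pos[of "kernel_V N z" N g0, OF \<gamma>N \<open>g0 > 0\<close>])
  note line = minimal_norm_on_coefficient_line[OF admissible_V_iff_on_line \<gamma>N \<open>g0 > 0\<close> S_def,
      OF inj_on_unit_root[OF assms]]
  show ?thesis
  proof (intro conjI allI impI ballI)
    show "\<exists>p. vanishing_precert_vec N N z p"
      using line(1) unfolding vanishing_precert_vec_def .
    fix p x assume p: "vanishing_precert_vec N N z p" and x: "x \<in> {0..<1}" "x \<notin> z ` {..<N}"
    have eq: "Phi_adj N p x = complex_of_real (1 - g0 / S * sin_sq_prod N z x)"
      using line(2) p by (simp add: vanishing_precert_vec_def trig_poly_kernel_V)
    then show "Phi_adj N p x \<in> \<real>" by simp
    have "g0 / S * sin_sq_prod N z x > 0"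
      using \<open>g0 > 0\<close> \<open>S > 0\<close> sin_sq_prod_pos[OF zin x] by simp
    then show "Re (Phi_adj N p x) < 1" using eq by simp
  qed
qed

lemma alternating_binomial_sum_Suc:
  fixes f :: "nat \<Rightarrow> 'a::comm_ring_1"
  shows "(\<Sum>j\<le>Suc n. (-1)^j * of_nat (Suc n choose j) * f j) =
         (\<Sum>j\<le>n. (-1)^j * of_nat (n choose j) * (f j - f (Suc j)))"
proof -
  define h where "h j = (-1)^j * of_nat (n choose j) * f j" for j
  have "(\<Sum>j\<le>Suc n. h j) = h 0 + (\<Sum>i\<le>n. h (Suc i))" by (rule sum.atMost_Suc_shift)
  moreover have "(\<Sum>j\<le>Suc n. h j) = (\<Sum>j\<le>n. h j)" by (simp add: h_def binomial_eq_0)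
  ultimately have shift: "(\<Sum>i\<le>n. h (Suc i)) = (\<Sum>j\<le>n. h j) - h 0" by (simp add: algebra_simps)
  have "(\<Sum>j\<le>Suc n. (-1)^j * of_nat (Suc n choose j) * f j) =
        f 0 + (\<Sum>i\<le>n. (-1)^(Suc i) * of_nat (Suc n choose Suc i) * f (Suc i))"
    by (subst sum.atMost_Suc_shift) simp
  also have "\<dots> = f 0 + (\<Sum>i\<le>n. h (Suc i) - (-1)^i * of_nat (n choose i) * f (Suc i))"
    by (intro arg_cong[where f="\<lambda>x. f 0 + x"] sum.cong refl) (simp add: h_def algebra_simps)
  also have "\<dots> = f 0 + (\<Sum>i\<le>n. h (Suc i)) - (\<Sum>i\<le>n. (-1)^i * of_nat (n choose i) * f (Suc i))"
    by (simp add: sum_subtractf)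
  also have "\<dots> = (\<Sum>j\<le>n. h j) - (\<Sum>i\<le>n. (-1)^i * of_nat (n choose i) * f (Suc i))"
    unfolding shift by (simp add: h_def)
  also have "\<dots> = (\<Sum>j\<le>n. (-1)^j * of_nat (n choose j) * (f j - f (Suc j)))"
    by (simp add: h_def sum_subtractf[symmetric] algebra_simps)
  finally show ?thesis .
qed

lemma alternating_binomial_power_sum:
  "s < n \<Longrightarrow> (\<Sum>j\<le>n. (-1)^j * of_nat (n choose j) * (of_nat j :: 'a::comm_ring_1)^s) = 0"
proof (induction n arbitrary: s)
  case (Suc n)
  have diff: "(of_nat j :: 'a)^s - of_nat (Suc j)^s = - (\<Sum>t<s. of_nat (s choose t) * of_nat j ^ t)" for j
    using binomial_ring[of "of_nat j :: 'a" 1 s]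
    by (simp add: lessThan_Suc_atMost[symmetric] add.commute)
  have "(\<Sum>j\<le>Suc n. (-1)^j * of_nat (Suc n choose j) * (of_nat j :: 'a)^s) =
        - (\<Sum>t<s. of_nat (s choose t) * (\<Sum>j\<le>n. (-1)^j * of_nat (n choose j) * (of_nat j :: 'a)^t))"
    unfolding alternating_binomial_sum_Suc diff
    by (simp add: sum_distrib_left sum_negf[symmetric] algebra_simps sum.swap[of _ "{..n}"])
  also have "\<dots> = 0" using Suc by simp
  finally show ?case .
qed simp

lemma sum_poly_eq_0_of_moments:
  fixes d x :: "nat \<Rightarrow> 'a::comm_ring_1"
  assumes "\<forall>s<n. (\<Sum>j\<in>A. d j * x j ^ s) = 0" "degree Q < n"
  shows "(\<Sum>j\<in>A. d j * poly Q (x j)) = 0"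
proof -
  have "(\<Sum>j\<in>A. d j * poly Q (x j)) = (\<Sum>i\<le>degree Q. coeff Q i * (\<Sum>j\<in>A. d j * x j ^ i))"
    unfolding poly_altdef by (simp add: sum_distrib_left sum.swap[of _ A] algebra_simps)
  also have "\<dots> = 0" using assms by simp
  finally show ?thesis .
qed

definition centered :: "nat \<Rightarrow> nat \<Rightarrow> complex" where
  "centered N j = of_nat j - of_nat N"

definition kernel_W :: "nat \<Rightarrow> nat \<Rightarrow> complex" where
  "kernel_W N j = complex_of_real ((- 1 / 4)^N * (-1)^j * real (2 * N choose j))"

lemma trig_poly_deriv_at_0:
  "trig_poly_deriv N d s 0 = (2 * of_real pi * \<i>)^s * (\<Sum>j\<le>2*N. d j * centered N j ^ s)"
proof -
  have "\<i> * complex_of_real (freq N j) = (2 * of_real pi * \<i>) * centered N j" for j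
    by (simp add: freq_def centered_def algebra_simps)
  then show ?thesis
    unfolding trig_poly_deriv_def sum_distrib_left
    by (intro sum.cong refl) (simp add: power_mult_distrib)
qed

lemma moments_kernel_W: "s < 2*N \<Longrightarrow> (\<Sum>j\<le>2*N. kernel_W N j * centered N j ^ s) = 0"
proof -
  assume "s < 2*N"
  have "(\<Sum>j\<le>2*N. kernel_W N j * centered N j ^ s) = of_real ((- 1 / 4)^N) *
        (\<Sum>j\<le>2*N. ((-1)^j * of_nat (2*N choose j)) * poly ([:- of_nat N, 1:]^s) (of_nat j))"
    unfolding sum_distrib_left
    by (intro sum.cong refl) (simp add: kernel_W_def centered_def poly_power algebra_simps)
  also have "(\<Sum>j\<le>2*N. ((-1)^j * of_nat (2*N choose j)) *
               poly ([:- of_nat N, 1:]^s) (of_nat j :: complex)) = 0"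
    using alternating_binomial_power_sum \<open>s < 2*N\<close>
    by (intro sum_poly_eq_0_of_moments) (auto simp: degree_linear_power)
  finally show ?thesis by simp
qed

text \<open>The moment conditions for s < 2N say that \<open>\<Sum> d\<^sub>j Q(j - N) = 0\<close> for every Q of degree
  below 2N; taking Q vanishing at all nodes except 0 and m links \<open>d\<^sub>m\<close> to \<open>d\<^sub>0\<close>.\<close>

lemma kernel_W_spans:
  assumes moments: "\<forall>s<2*N. (\<Sum>j\<le>2*N. d j * centered N j ^ s) = 0"
  shows "\<exists>t. \<forall>j\<le>2*N. d j = t * kernel_W N j"
proof -
  define Q where "Q m = (\<Prod>i\<in>{1..2*N}-{m}. [:- centered N i, 1:])" for m
  have degQ: "degree (Q m) < 2*N" if "m \<in> {1..2*N}" for m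
    using that unfolding Q_def
    by (subst degree_prod_sum_eq) (auto simp: card_Diff_singleton)
  have polyQ: "poly (Q m) (centered N j) = (\<Prod>i\<in>{1..2*N}-{m}. centered N j - centered N i)" for m j
    by (simp add: Q_def poly_prod)
  have relation: "e 0 * poly (Q m) (centered N 0) + e m * poly (Q m) (centered N m) = 0"
    if "\<forall>s<2*N. (\<Sum>j\<le>2*N. e j * centered N j ^ s) = 0" "m \<in> {1..2*N}" for e m
  proof -
    have "(\<Sum>j\<le>2*N. e j * poly (Q m) (centered N j)) = 0"
      by (rule sum_poly_eq_0_of_moments[OF that(1) degQ[OF that(2)]])
    moreover have "(\<Sum>j\<le>2*N. e j * poly (Q m) (centered N j)) =
                   (\<Sum>j\<in>{0,m}. e j * poly (Q m) (centered N j))"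
      using that(2) unfolding polyQ by (intro sum.mono_neutral_right) auto
    ultimately show ?thesis using that(2) by simp
  qed
  have "kernel_W N 0 \<noteq> 0" by (simp add: kernel_W_def)
  have "d j = d 0 / kernel_W N 0 * kernel_W N j" if j: "j \<le> 2*N" for j
  proof (cases "j = 0")
    case False
    then have m: "j \<in> {1..2*N}" using j by auto
    define P0 where "P0 = poly (Q j) (centered N 0)"
    define Pj where "Pj = poly (Q j) (centered N j)"
    have "Pj \<noteq> 0" unfolding Pj_def polyQ by (simp add: prod_zero_iff centered_def)
    have d: "d j * Pj = - (d 0 * P0)"
      using relation[OF moments m] unfolding P0_def Pj_def by (simp only: add_eq_0_iff)
    have w: "kernel_W N j * Pj = - (kernel_W N 0 * P0)"
      using relation[OF _ m, of "kernel_W N"] moments_kernel_W unfolding P0_def Pj_def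
      by (simp only: add_eq_0_iff) blast
    have "(d j * kernel_W N 0) * Pj = kernel_W N 0 * (d j * Pj)" by (simp only: ac_simps)
    also have "\<dots> = d 0 * (kernel_W N j * Pj)" unfolding d w by simp
    finally have "(d j * kernel_W N 0) * Pj = (d 0 * kernel_W N j) * Pj" by (simp only: ac_simps)
    then have "d j * kernel_W N 0 = d 0 * kernel_W N j"
      using \<open>Pj \<noteq> 0\<close> by (rule mult_right_cancel[THEN iffD1, rotated])
    then show ?thesis using \<open>kernel_W N 0 \<noteq> 0\<close> by (simp add: field_simps)
  qed (use \<open>kernel_W N 0 \<noteq> 0\<close> in simp)
  then show ?thesis by blast
qed

lemma trig_poly_kernel_W: "trig_poly N (kernel_W N) x = complex_of_real ((sin (pi * x))^(2*N))"
proof -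
  define U where "U = cis (pi * x)"
  have iU: "inverse U = cis (- (pi * x))" by (simp add: U_def cis_inverse)
  have "U - inverse U = 2 * \<i> * complex_of_real (sin (pi * x))"
    unfolding U_def cis_inverse by (rule cis_minus_cis_neg)
  then have "complex_of_real (sin (pi * x)) = (U + - inverse U) / (2 * \<i>)" by simp
  moreover have "(2 * \<i>)^(2*N) = (-4::complex)^N" by (simp add: power_mult)
  ultimately have "complex_of_real ((sin (pi * x))^(2*N)) = (U + - inverse U)^(2*N) / (-4)^N"
    by (simp only: of_real_power power_divide)
  also have "(U + - inverse U)^(2*N) = (\<Sum>k\<le>2*N. of_nat (2*N choose k) * U^k * (- inverse U)^(2*N-k))"
    by (rule binomial_ring)
  also have "\<dots> = (\<Sum>k\<le>2*N. of_nat (2*N choose k) * (-1)^k * cis (freq N k * x))"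
  proof (rule sum.cong[OF refl])
    fix k assume k: "k \<in> {..2*N}"
    have "(-1::complex)^(2*N-k) = (-1)^k"
      using k by (auto simp: minus_one_power_iff)
    moreover have "U^k * (inverse U)^(2*N-k) = cis (real k * (pi * x) + real (2*N-k) * (- (pi * x)))"
      unfolding iU unfolding U_def Complex.DeMoivre cis_mult ..
    moreover have "real k * (pi * x) + real (2*N-k) * (- (pi * x)) = freq N k * x"
      using k by (simp add: of_nat_diff freq_def algebra_simps)
    ultimately show "of_nat (2*N choose k) * U^k * (- inverse U)^(2*N-k) =
                     of_nat (2*N choose k) * (-1)^k * cis (freq N k * x)"
      by (simp add: power_minus[of "inverse U"] mult_ac)
  qed
  also have "(\<Sum>k\<le>2*N. of_nat (2*N choose k) * (-1)^k * cis (freq N k * x)) / (-4)^N =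
             trig_poly N (kernel_W N) x"
  proof -
    have "(- (1 / 4 :: complex))^N = (1 / (-4))^N" by simp
    then have "(- (1 / 4 :: complex))^N = 1 / (-4)^N" by (simp only: power_one_over)
    then show ?thesis
      unfolding trig_poly_def sum_divide_distrib
      by (intro sum.cong refl) (simp add: kernel_W_def)
  qed
  finally show ?thesis ..
qed

lemma interpolates_W_iff_on_line:
  assumes "N \<ge> 1"
  shows "(trig_poly_deriv N c 0 0 = 1 \<and> (\<forall>s\<in>{1..2*N-1}. trig_poly_deriv N c s 0 = 0)) \<longleftrightarrow>
         (\<exists>t. \<forall>j\<le>2*N. c j = one_coeffs N j + t * kernel_W N j)"
proof
  assume c: "trig_poly_deriv N c 0 0 = 1 \<and> (\<forall>s\<in>{1..2*N-1}. trig_poly_deriv N c s 0 = 0)"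
  have "\<forall>s<2*N. (\<Sum>j\<le>2*N. (c j - one_coeffs N j) * centered N j ^ s) = 0"
  proof (intro allI impI)
    fix s assume "s < 2*N"
    then have "trig_poly_deriv N (\<lambda>j. c j - one_coeffs N j) s 0 = 0"
      using c by (cases "s = 0") (auto simp: trig_poly_deriv_diff trig_poly_deriv_one_coeffs)
    then show "(\<Sum>j\<le>2*N. (c j - one_coeffs N j) * centered N j ^ s) = 0"
      unfolding trig_poly_deriv_at_0 by simp
  qed
  from kernel_W_spans[OF this] show "\<exists>t. \<forall>j\<le>2*N. c j = one_coeffs N j + t * kernel_W N j"
    by (metis diff_add_cancel add.commute)
next
  assume "\<exists>t. \<forall>j\<le>2*N. c j = one_coeffs N j + t * kernel_W N j"
  then obtain t where "\<forall>j\<le>2*N. c j = one_coeffs N j + t * kernel_W N j" by blast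
  then have "trig_poly_deriv N c s 0 =
             trig_poly_deriv N (one_coeffs N) s 0 + t * trig_poly_deriv N (kernel_W N) s 0" for s
    by (simp add: trig_poly_deriv_cong[of N c] trig_poly_deriv_add_scaled)
  moreover have "trig_poly_deriv N (kernel_W N) s 0 = 0" if "s < 2*N" for s
    using that by (simp add: trig_poly_deriv_at_0 moments_kernel_W)
  ultimately show "trig_poly_deriv N c 0 0 = 1 \<and> (\<forall>s\<in>{1..2*N-1}. trig_poly_deriv N c s 0 = 0)"
    using assms by (auto simp: trig_poly_deriv_one_coeffs)
qed

lemma admissible_W_iff_on_line:
  assumes "N \<ge> 1"
  shows "admissible_W N N q \<longleftrightarrow>
         L2 q \<and> (\<exists>t. \<forall>j\<le>2*N. fourier_coeff N q j = one_coeffs N j + t * kernel_W N j)"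
proof (cases "L2 q")
  case True
  then show ?thesis
    unfolding admissible_W_def Phi_adj_eq_trig_poly[OF True] hderiv_trig_poly
    unfolding trig_poly_deriv_0[symmetric]
    using interpolates_W_iff_on_line[OF assms] by simp
qed (simp add: admissible_W_def)

lemma limiting_precertificate:
  assumes "N \<ge> 1"
  shows "(\<exists>p. limiting_precert_vec N N p) \<and>
         (\<exists>C>0. \<forall>p. limiting_precert_vec N N p \<longrightarrow>
            (\<forall>x. Phi_adj N p x = complex_of_real (1 - C * (sin (pi * x)) ^ (2 * N))))"
proof -
  define g0 where "g0 = (1/4)^N * real (2 * N choose N)"
  define S where "S = (\<Sum>j\<le>2*N. (cmod (kernel_W N j))\<^sup>2)"
  have \<gamma>N: "kernel_W N N = complex_of_real g0"
    unfolding kernel_W_def g0_def by (simp add: power_mult_distrib[symmetric])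
  have "g0 > 0" unfolding g0_def by simp
  have "S > 0" unfolding S_def by (rule sum_norm_sq_pos[of "kernel_W N" N g0, OF \<gamma>N \<open>g0 > 0\<close>])
  note line = minimal_norm_on_coefficient_line[OF admissible_W_iff_on_line \<gamma>N \<open>g0 > 0\<close> S_def,
      OF assms]
  have "Phi_adj N p x = complex_of_real (1 - g0 / S * (sin (pi * x)) ^ (2 * N))"
    if "limiting_precert_vec N N p" for p x
    using line(2) that by (simp add: limiting_precert_vec_def trig_poly_kernel_W)
  moreover have "g0 / S > 0" using \<open>g0 > 0\<close> \<open>S > 0\<close> by simp
  ultimately show ?thesis
    using line(1) unfolding limiting_precert_vec_def by blast
qed

theorem mainTheorem1:
  fixes N fc :: nat
  assumes "N \<ge> 1" and "fc = N"
  shows "(\<forall>z. (\<forall>i<N. z i \<in> {0..<1}) \<and> inj_on z {..<N} \<longrightarrow>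
            (\<exists>p. vanishing_precert_vec fc N z p) \<and>
            (\<forall>p. vanishing_precert_vec fc N z p \<longrightarrow>
               (\<forall>x\<in>{0..<1}. x \<notin> z ` {..<N} \<longrightarrow>
                  Phi_adj fc p x \<in> \<real> \<and> Re (Phi_adj fc p x) < 1)))
       \<and> (\<exists>p. limiting_precert_vec fc N p)
       \<and> (\<exists>C>0. \<forall>p. limiting_precert_vec fc N p \<longrightarrow>
            (\<forall>x. Phi_adj fc p x = complex_of_real (1 - C * (sin (pi * x)) ^ (2 * N))))
       \<and> (\<forall>p. limiting_precert_vec fc N p \<longrightarrow>
            (\<forall>x\<in>{0<..<1}. Phi_adj fc p x \<in> \<real> \<and> Re (Phi_adj fc p x) < 1))"
proof -
  obtain C where "C > 0" and W: "\<And>p x. limiting_precert_vec N N p \<Longrightarrow>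
      Phi_adj N p x = complex_of_real (1 - C * (sin (pi * x)) ^ (2 * N))"
    using limiting_precertificate[OF assms(1)] by blast
  have "Phi_adj N p x \<in> \<real> \<and> Re (Phi_adj N p x) < 1"
    if "limiting_precert_vec N N p" "x \<in> {0<..<1}" for p x
  proof -
    have "sin (pi * x) > 0" using that(2) by (intro sin_gt_zero) auto
    then show ?thesis using W[OF that(1)] \<open>C > 0\<close> by simp
  qed
  then show ?thesis
    using vanishing_precertificate limiting_precertificate[OF assms(1)] W \<open>C > 0\<close>
    unfolding assms(2) by blast
qed

end
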